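(* Let $s\geq 2$ be an integer and let $T$ be a tree with $n$ vertices in which every vertex has degree at most $s$. Let $\mathcal{W}$ denote the Wiener index of $T$, and let $\mathcal{V}_{1,s}$ be the tree obtained from $T$ by one application of the Vicsek fractal operation $V_s$. Then the Wiener index of $\mathcal{V}_{1,s}$ is $$\mathcal{W}_{\mathcal{V}_{1,s}}=3(s+1)^{2}\mathcal{W}+(s^{2}-s-2)n^{2}+(s+2)n.$$
   Context: All graphs are simple and connected. The distance $d_{uv}$ between vertices $u,v$ is the number of edges of a shortest path joining them. The Wiener index of a graph $G=(V,E)$ is $\mathcal{W}=\sum_{\{u,v\},\,u\neq v} d_{uv}=\frac12\sum_{u\in V}\sum_{v\in V}d_{uv}$ (sum over unordered pairs of distinct vertices). The Vicsek fractal operation $V_s$ applied to a tree $T$ whose maximum degree is at most $s$ produces a new tree as follows: first, every edge $uv$ of $T$ is replaced by a path $u-a-b-v$ of length $3$ through two new vertices $a,b$ (distinct for each edge); then, to every original vertex $v$ of $T$, having degree $k_v$ in $T$, one attaches $s-k_v$ new pendant vertices (leaves), so that every original vertex has degree exactly $s$. The inserted vertices $a,b$ receive no further pendant vertices. *)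

theory Defs
  imports Main
begin

definition simple_graph :: "'a set \<Rightarrow> ('a \<Rightarrow> 'a \<Rightarrow> bool) \<Rightarrow> bool" where
  "simple_graph V E \<longleftrightarrow> finite V \<and> (\<forall>u v. E u v \<longrightarrow> u \<in> V \<and> v \<in> V)
     \<and> (\<forall>u v. E u v \<longrightarrow> E v u) \<and> (\<forall>u. \<not> E u u)"

definition is_walk :: "'a set \<Rightarrow> ('a \<Rightarrow> 'a \<Rightarrow> bool) \<Rightarrow> 'a list \<Rightarrow> bool" where
  "is_walk V E xs \<longleftrightarrow> xs \<noteq> [] \<and> set xs \<subseteq> V \<and>
     (\<forall>i. Suc i < length xs \<longrightarrow> E (xs ! i) (xs ! Suc i))"

definition connected_graph :: "'a set \<Rightarrow> ('a \<Rightarrow> 'a \<Rightarrow> bool) \<Rightarrow> bool" where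
  "connected_graph V E \<longleftrightarrow>
     (\<forall>u\<in>V. \<forall>v\<in>V. \<exists>xs. is_walk V E xs \<and> hd xs = u \<and> last xs = v)"

definition has_cycle :: "'a set \<Rightarrow> ('a \<Rightarrow> 'a \<Rightarrow> bool) \<Rightarrow> bool" where
  "has_cycle V E \<longleftrightarrow> (\<exists>xs. is_walk V E xs \<and> distinct xs \<and> length xs \<ge> 3 \<and> E (last xs) (hd xs))"

definition is_tree :: "'a set \<Rightarrow> ('a \<Rightarrow> 'a \<Rightarrow> bool) \<Rightarrow> bool" where
  "is_tree V E \<longleftrightarrow> simple_graph V E \<and> V \<noteq> {} \<and> connected_graph V E \<and> \<not> has_cycle V E"

definition degree :: "'a set \<Rightarrow> ('a \<Rightarrow> 'a \<Rightarrow> bool) \<Rightarrow> 'a \<Rightarrow> nat" where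
  "degree V E v = card {u \<in> V. E v u}"

definition gdist :: "'a set \<Rightarrow> ('a \<Rightarrow> 'a \<Rightarrow> bool) \<Rightarrow> 'a \<Rightarrow> 'a \<Rightarrow> nat" where
  "gdist V E u v = (LEAST k. \<exists>xs. is_walk V E xs \<and> hd xs = u \<and> last xs = v \<and> length xs = Suc k)"

text \<open>Wiener index: sum of distances over unordered pairs of distinct vertices
  (= half the sum over all ordered pairs).\<close>
definition wiener :: "'a set \<Rightarrow> ('a \<Rightarrow> 'a \<Rightarrow> bool) \<Rightarrow> nat" where
  "wiener V E = (\<Sum>u\<in>V. \<Sum>v\<in>V. gdist V E u v) div 2"

text \<open>Vertices of the Vicsek tree V_s(T):
  Orig v   -- original vertex v;
  Sub u v  -- for an edge uv, the inserted vertex adjacent to u on the path u - Sub u v - Sub v u - v;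
  Leaf v i -- the i-th pendant vertex attached to v (i < s - deg v).\<close>
datatype 'a vvert = Orig 'a | Sub 'a 'a | Leaf 'a nat

definition vicsek_V :: "nat \<Rightarrow> 'a set \<Rightarrow> ('a \<Rightarrow> 'a \<Rightarrow> bool) \<Rightarrow> 'a vvert set" where
  "vicsek_V s V E = Orig ` V \<union> {Sub u v | u v. E u v}
     \<union> {Leaf v i | v i. v \<in> V \<and> i < s - degree V E v}"

fun vicsek_E :: "nat \<Rightarrow> 'a set \<Rightarrow> ('a \<Rightarrow> 'a \<Rightarrow> bool) \<Rightarrow> 'a vvert \<Rightarrow> 'a vvert \<Rightarrow> bool" where
  "vicsek_E s V E (Orig u) (Sub u' v) = (u = u' \<and> E u v)"
| "vicsek_E s V E (Sub u' v) (Orig u) = (u = u' \<and> E u v)"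
| "vicsek_E s V E (Sub u v) (Sub v' u') = (u = u' \<and> v = v' \<and> E u v)"
| "vicsek_E s V E (Orig v) (Leaf v' i) = (v = v' \<and> v \<in> V \<and> i < s - degree V E v)"
| "vicsek_E s V E (Leaf v' i) (Orig v) = (v = v' \<and> v \<in> V \<and> i < s - degree V E v)"
| "vicsek_E s V E _ _ = False"

end

theory Submission
  imports Defs
begin

text \<open>Every vertex x of the new tree hangs on an original vertex anchor x. An edge of T becomes
  a path of length 3, so the distance from an original vertex b to x is
  3 d(b, anchor x) + offset x b, where the offset is 0 for original vertices, 1 for pendant
  vertices, and -1 or 1 for a vertex inserted on the edge a w according to whether w is closer
  to b than a. One more step from a pendant or inserted vertex gives
  d(x, y) = 3 d(anchor x, anchor y) + offset x (anchor y) + offset y (anchor x) for x \<noteq> y.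
  Summing over all pairs, every original vertex anchors s + 1 vertices, and for fixed b the
  offsets add up to s n - 2 (n - 1) with n = card V, because every vertex a \<noteq> b has exactly
  one neighbour closer to b; this uniqueness is where acyclicity is used.\<close>

section \<open>Walks\<close>

lemma is_walk_Nil [simp]: "\<not> is_walk V E []"
  by (simp add: is_walk_def)

lemma is_walk_nonempty: "is_walk V E xs \<Longrightarrow> xs \<noteq> []"
  by (simp add: is_walk_def)

lemma is_walk_singleton [simp]: "is_walk V E [x] \<longleftrightarrow> x \<in> V"
  by (simp add: is_walk_def)

lemma is_walk_Cons_Cons [simp]:
  "is_walk V E (x # y # xs) \<longleftrightarrow> x \<in> V \<and> E x y \<and> is_walk V E (y # xs)"
  by (auto simp: is_walk_def nth_Cons split: nat.splits)

lemma is_walk_append: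
  assumes "is_walk V E xs" "is_walk V E ys" "E (last xs) (hd ys)"
  shows "is_walk V E (xs @ ys)"
  using assms
proof (induction xs rule: induct_list012)
  case (2 x)
  then show ?case by (cases ys) auto
next
  case (3 x y xs)
  then show ?case by auto
qed simp

lemma is_walk_rev:
  assumes "is_walk V E xs" "\<And>u v. E u v \<Longrightarrow> E v u"
  shows "is_walk V E (rev xs)"
  using assms(1)
proof (induction xs rule: induct_list012)
  case (3 x y xs)
  then have "is_walk V E (rev (y # xs) @ [x])"
    by (intro is_walk_append) (auto intro: assms(2) simp: last_rev)
  then show ?case by simp
qed simp_all

definition reachable :: "'a set \<Rightarrow> ('a \<Rightarrow> 'a \<Rightarrow> bool) \<Rightarrow> 'a \<Rightarrow> 'a \<Rightarrow> bool" where
  "reachable V E x y \<longleftrightarrow> (\<exists>xs. is_walk V E xs \<and> hd xs = x \<and> last xs = y)"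

lemma reachable_refl: "x \<in> V \<Longrightarrow> reachable V E x x"
  unfolding reachable_def by (intro exI[of _ "[x]"]) simp

lemma reachable_edge:
  assumes "reachable V E x y" "E y z" "z \<in> V"
  shows "reachable V E x z"
proof -
  obtain xs where "is_walk V E xs" "hd xs = x" "last xs = y"
    using assms(1) by (auto simp: reachable_def)
  moreover from this have "is_walk V E (xs @ [z])"
    using assms(2,3) by (intro is_walk_append) auto
  ultimately have "is_walk V E (xs @ [z]) \<and> hd (xs @ [z]) = x \<and> last (xs @ [z]) = z"
    by (auto simp: hd_append dest: is_walk_nonempty)
  then show ?thesis
    unfolding reachable_def by blast
qed

lemma connected_graphI_root:
  assumes "\<And>u v. E u v \<Longrightarrow> E v u" "\<And>v. v \<in> V \<Longrightarrow> reachable V E r v"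
  shows "connected_graph V E"
  unfolding connected_graph_def
proof (intro ballI)
  fix u v assume "u \<in> V" "v \<in> V"
  then obtain xs ys where xs: "is_walk V E xs" "hd xs = r" "last xs = u"
    and ys: "is_walk V E ys" "hd ys = r" "last ys = v"
    using assms(2) by (meson reachable_def)
  have rev_xs: "is_walk V E (rev xs)" "hd (rev xs) = u" "last (rev xs) = r" "rev xs \<noteq> []"
    using is_walk_rev[OF xs(1) assms(1)] xs is_walk_nonempty[OF xs(1)] by (auto simp: hd_rev last_rev)
  show "\<exists>zs. is_walk V E zs \<and> hd zs = u \<and> last zs = v"
  proof (cases "tl ys")
    case Nil
    then have "ys = [r]"
      using ys by (cases ys) auto
    then show ?thesis
      using rev_xs ys by (intro exI[of _ "rev xs"]) auto
  next
    case (Cons y ys')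
    then have "ys = r # y # ys'"
      using ys by (cases ys) auto
    then have "is_walk V E (rev xs @ y # ys')"
      using rev_xs ys by (intro is_walk_append) auto
    moreover have "hd (rev xs @ y # ys') = u" "last (rev xs @ y # ys') = v"
      using rev_xs ys \<open>ys = r # y # ys'\<close> by (auto simp: hd_append)
    ultimately show ?thesis
      by blast
  qed
qed

section \<open>Distances in connected graphs\<close>

lemma even_double_sum_symmetric:
  fixes h :: "'b \<Rightarrow> 'b \<Rightarrow> nat"
  assumes "finite A"
    and "\<And>a b. a \<in> A \<Longrightarrow> b \<in> A \<Longrightarrow> h a b = h b a"
    and "\<And>a. a \<in> A \<Longrightarrow> h a a = 0"
  shows "even (\<Sum>a\<in>A. \<Sum>b\<in>A. h a b)"
  using assms
proof (induction A rule: finite_induct)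
  case (insert x A)
  have "(\<Sum>a\<in>insert x A. \<Sum>b\<in>insert x A. h a b)
      = h x x + (\<Sum>b\<in>A. h x b) + (\<Sum>a\<in>A. h a x) + (\<Sum>a\<in>A. \<Sum>b\<in>A. h a b)"
    using insert.hyps by (simp add: sum.distrib)
  also have "(\<Sum>a\<in>A. h a x) = (\<Sum>b\<in>A. h x b)"
    using insert.prems(1) by (intro sum.cong) auto
  finally show ?case
    using insert by simp
qed simp

locale connected_simple_graph =
  fixes V :: "'a set" and E :: "'a \<Rightarrow> 'a \<Rightarrow> bool"
  assumes simple: "simple_graph V E"
    and connected: "connected_graph V E"
begin

abbreviation d :: "'a \<Rightarrow> 'a \<Rightarrow> nat" where
  "d \<equiv> gdist V E"

lemma finite_V: "finite V"
  using simple by (simp add: simple_graph_def)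

lemma edge_vertices: "E u v \<Longrightarrow> u \<in> V" "E u v \<Longrightarrow> v \<in> V"
  using simple by (auto simp: simple_graph_def)

lemma edge_sym: "E u v \<Longrightarrow> E v u"
  using simple by (simp add: simple_graph_def)

lemma edge_irrefl: "\<not> E u u"
  using simple by (simp add: simple_graph_def)

lemma shortest_walk:
  assumes "x \<in> V" "y \<in> V"
  obtains xs where "is_walk V E xs" "hd xs = x" "last xs = y" "length xs = Suc (d x y)"
proof -
  obtain xs where "is_walk V E xs" "hd xs = x" "last xs = y"
    using connected assms unfolding connected_graph_def by blast
  then have "\<exists>k xs. is_walk V E xs \<and> hd xs = x \<and> last xs = y \<and> length xs = Suc k"
    by (intro exI[of _ "length xs - 1"] exI[of _ xs]) (auto dest: is_walk_nonempty)
  then have "\<exists>xs. is_walk V E xs \<and> hd xs = x \<and> last xs = y \<and> length xs = Suc (d x y)"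
    unfolding gdist_def by (rule LeastI_ex)
  then show ?thesis
    using that by blast
qed

lemma gdist_less_length:
  assumes "is_walk V E xs" "hd xs = x" "last xs = y"
  shows "d x y < length xs"
proof -
  have len: "length xs = Suc (length xs - 1)"
    using assms(1) by (auto dest: is_walk_nonempty)
  have "d x y \<le> length xs - 1"
    unfolding gdist_def by (rule Least_le) (use assms len in blast)
  then show ?thesis
    using len by linarith
qed

lemma gdist_self [simp]: "x \<in> V \<Longrightarrow> d x x = 0"
  using gdist_less_length[of "[x]" x x] by simp

lemma gdist_eq_0_iff:
  assumes "x \<in> V" "y \<in> V"
  shows "d x y = 0 \<longleftrightarrow> x = y"
proof
  assume "d x y = 0"
  then obtain xs where "is_walk V E xs" "hd xs = x" "last xs = y" "length xs = 1"
    using shortest_walk[OF assms] by auto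
  then show "x = y"
    by (cases xs) auto
qed (use assms in simp)

lemma gdist_commute:
  assumes "x \<in> V" "y \<in> V"
  shows "d x y = d y x"
proof -
  have "d y x \<le> d x y" if "x \<in> V" "y \<in> V" for x y
  proof -
    obtain xs where xs: "is_walk V E xs" "hd xs = x" "last xs = y" "length xs = Suc (d x y)"
      using shortest_walk \<open>x \<in> V\<close> \<open>y \<in> V\<close> by blast
    have "is_walk V E (rev xs)"
      using xs(1) edge_sym by (rule is_walk_rev)
    moreover have "hd (rev xs) = y" "last (rev xs) = x"
      using xs by (auto simp: hd_rev last_rev)
    ultimately show ?thesis
      using gdist_less_length xs(4) by fastforce
  qed
  then show ?thesis
    using assms by (simp add: le_antisym)
qed

lemma gdist_le_neighbour':
  assumes "E x z" "y \<in> V"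
  shows "d x y \<le> d z y + 1"
proof -
  obtain xs where xs: "is_walk V E xs" "hd xs = z" "last xs = y" "length xs = Suc (d z y)"
    using shortest_walk[OF edge_vertices(2)[OF assms(1)] assms(2)] .
  then have "is_walk V E (x # xs)"
    using assms(1) edge_vertices(1) by (cases xs) auto
  then have "d x y < length (x # xs)"
    using xs by (intro gdist_less_length) (auto dest: is_walk_nonempty)
  then show ?thesis
    using xs(4) by simp
qed

lemma gdist_le_neighbour:
  assumes "E y z" "x \<in> V"
  shows "d x z \<le> d x y + 1"
  using gdist_le_neighbour'[OF edge_sym[OF assms(1)] assms(2)] gdist_commute assms edge_vertices
  by metis

lemma gdist_edge: "E x y \<Longrightarrow> d x y = 1"
  using gdist_le_neighbour'[of x y y] gdist_eq_0_iff[of x y] edge_vertices edge_irrefl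
  by fastforce

lemma closer_neighbour':
  assumes "x \<in> V" "y \<in> V" "x \<noteq> y"
  obtains z where "E x z" "d z y + 1 = d x y"
proof -
  obtain xs where xs: "is_walk V E xs" "hd xs = x" "last xs = y" "length xs = Suc (d x y)"
    using shortest_walk[OF assms(1,2)] .
  then obtain z zs where zs: "xs = x # z # zs"
    using assms(3) by (cases xs rule: remdups_adj.cases) auto
  then have "E x z" "is_walk V E (z # zs)"
    using xs(1) by auto
  then have "d z y < length (z # zs)"
    using xs zs by (intro gdist_less_length) auto
  moreover have "d x y \<le> d z y + 1"
    using \<open>E x z\<close> assms(2) by (rule gdist_le_neighbour')
  ultimately have "d z y + 1 = d x y"
    using xs(4) zs by simp
  with \<open>E x z\<close> show ?thesis
    by (rule that)
qed

lemma closer_neighbour: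
  assumes "x \<in> V" "y \<in> V" "x \<noteq> y"
  obtains z where "E y z" "d x z + 1 = d x y"
  using closer_neighbour'[of y x] assms gdist_commute edge_vertices by metis

lemma gdist_eqI:
  fixes g :: "'a \<Rightarrow> int"
  assumes "x \<in> V" "g x = 0"
    and lipschitz: "\<And>y z. E y z \<Longrightarrow> g z \<le> g y + 1"
    and descent: "\<And>y. y \<in> V \<Longrightarrow> y \<noteq> x \<Longrightarrow> \<exists>z. E y z \<and> g z + 1 = g y"
    and nonneg: "\<And>y. y \<in> V \<Longrightarrow> 0 \<le> g y"
    and "y \<in> V"
  shows "int (d x y) = g y"
proof (rule antisym)
  show "g y \<le> int (d x y)"
    using \<open>y \<in> V\<close>
  proof (induction "d x y" arbitrary: y)
    case 0
    then show ?case
      using assms(1,2) gdist_eq_0_iff by force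
  next
    case (Suc n)
    then have "y \<noteq> x"
      using assms(1) by force
    then obtain z where "E y z" "d x z + 1 = d x y"
      using closer_neighbour assms(1) Suc.prems by metis
    moreover have "g z \<le> int (d x z)"
      using Suc calculation edge_vertices by force
    ultimately show ?case
      using lipschitz[OF edge_sym] by force
  qed
  show "int (d x y) \<le> g y"
    using \<open>y \<in> V\<close>
  proof (induction "nat (g y)" arbitrary: y rule: less_induct)
    case less
    show ?case
    proof (cases "y = x")
      case False
      then obtain z where "E y z" "g z + 1 = g y"
        using descent less.prems by blast
      moreover have "int (d x z) \<le> g z"
        using less calculation nonneg edge_vertices by force
      moreover have "d x y \<le> d x z + 1"
        using gdist_le_neighbour edge_sym calculation(1) assms(1) by blast
      ultimately show ?thesis
        by linarith
    qed (use assms(1,2) in simp)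
  qed
qed

lemma double_wiener:
  "2 * int (wiener V E) = (\<Sum>u\<in>V. \<Sum>v\<in>V. int (d u v))"
proof -
  have "even (\<Sum>u\<in>V. \<Sum>v\<in>V. d u v)"
    using finite_V gdist_commute by (intro even_double_sum_symmetric) auto
  then have "2 * wiener V E = (\<Sum>u\<in>V. \<Sum>v\<in>V. d u v)"
    unfolding wiener_def by simp
  then have "int (2 * wiener V E) = int (\<Sum>u\<in>V. \<Sum>v\<in>V. d u v)"
    by (rule arg_cong)
  then show ?thesis
    by simp
qed

section \<open>Trees\<close>

definition far_interior_walk :: "'a \<Rightarrow> 'a list \<Rightarrow> bool" where
  "far_interior_walk r xs \<longleftrightarrow> is_walk V E xs \<and> distinct xs \<and> 3 \<le> length xs \<and>
     (\<forall>w\<in>set xs. w \<noteq> hd xs \<longrightarrow> w \<noteq> last xs \<longrightarrow>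
        d r (hd xs) \<le> d r w \<and> d r (last xs) \<le> d r w)"

lemma far_interior_walk_rev:
  "far_interior_walk r xs \<Longrightarrow> far_interior_walk r (rev xs)"
  unfolding far_interior_walk_def
  using is_walk_rev edge_sym by (auto simp: hd_rev last_rev)

lemma far_interior_walk_extend:
  assumes "r \<in> V" "far_interior_walk r xs" "d r (last xs) \<le> d r (hd xs)" "\<not> has_cycle V E"
  obtains p where "far_interior_walk r (p # xs)" "d r p < d r (hd xs)"
proof -
  define x y where "x = hd xs" and "y = last xs"
  have walk: "is_walk V E xs" "distinct xs" "3 \<le> length xs"
    and interior: "\<And>w. w \<in> set xs \<Longrightarrow> w \<noteq> x \<Longrightarrow> w \<noteq> y \<Longrightarrow> d r x \<le> d r w \<and> d r y \<le> d r w"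
    using assms(2) by (auto simp: far_interior_walk_def x_def y_def)
  have "x \<in> V" "y \<in> V"
    using walk(1,3) by (auto simp: x_def y_def is_walk_def)
  have "x \<noteq> y"
    using walk(2,3) unfolding x_def y_def
    by (cases xs rule: rev_cases) (auto simp: hd_append split: if_splits)
  have "x \<noteq> r"
    using assms(1,3) \<open>x \<noteq> y\<close> gdist_eq_0_iff[OF assms(1) \<open>y \<in> V\<close>] by (auto simp: x_def y_def)
  then obtain p where p: "E x p" "d r p + 1 = d r x"
    using closer_neighbour assms(1) \<open>x \<in> V\<close> by metis
  have "p \<noteq> y"
  proof
    assume "p = y"
    then have "E (last xs) (hd xs)"
      using p(1) edge_sym by (simp add: x_def y_def)
    then show False
      using assms(4) walk unfolding has_cycle_def by blast
  qed
  then have "p \<notin> set xs"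
    using interior p edge_irrefl by force
  moreover have "is_walk V E (p # xs)"
  proof -
    obtain xs' where "xs = x # xs'"
      using walk(1) by (cases xs) (auto simp: x_def)
    then show ?thesis
      using walk(1) p(1) edge_sym edge_vertices(2) by auto
  qed
  moreover have "d r p \<le> d r w \<and> d r y \<le> d r w" if "w \<in> set xs" "w \<noteq> y" for w
    using interior[OF that(1) _ that(2)] p(2) assms(3) by (cases "w = x") (auto simp: x_def y_def)
  ultimately have "far_interior_walk r (p # xs)"
    using walk unfolding far_interior_walk_def y_def by auto
  moreover have "d r p < d r (hd xs)"
    using p by (simp add: x_def)
  ultimately show ?thesis
    by (rule that)
qed

text \<open>Extending the walk at its farther end by a closer neighbour keeps the interior far, so
  without a cycle the distances of the ends would descend forever.\<close>
lemma far_interior_walk_has_cycle: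
  assumes "r \<in> V" "far_interior_walk r xs"
  shows "has_cycle V E"
proof (rule ccontr)
  assume acyclic: "\<not> has_cycle V E"
  from assms(2) show False
  proof (induction "d r (hd xs) + d r (last xs)" arbitrary: xs rule: less_induct)
    case less
    have "xs \<noteq> []"
      using less.prems by (auto simp: far_interior_walk_def)
    show False
    proof (cases "d r (last xs) \<le> d r (hd xs)")
      case True
      obtain p where "far_interior_walk r (p # xs)" "d r p < d r (hd xs)"
        using far_interior_walk_extend[OF assms(1) less.prems True acyclic] .
      then show False
        using less.hyps[of "p # xs"] \<open>xs \<noteq> []\<close> by simp
    next
      case False
      have "far_interior_walk r (rev xs)"
        using less.prems by (rule far_interior_walk_rev)
      moreover have "d r (last (rev xs)) \<le> d r (hd (rev xs))"
        using False less.prems by (auto simp: hd_rev last_rev)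
      ultimately obtain p where "far_interior_walk r (p # rev xs)" "d r p < d r (last xs)"
        using far_interior_walk_extend[OF assms(1) _ _ acyclic] by (metis hd_rev)
      then show False
        using less.hyps[of "p # rev xs"] \<open>xs \<noteq> []\<close> by (simp add: last_rev)
    qed
  qed
qed

end

locale tree = connected_simple_graph +
  assumes acyclic: "\<not> has_cycle V E"
begin

lemma lower_neighbour_unique:
  assumes "r \<in> V" "E b c1" "E b c2" "d r c1 \<le> d r b" "d r c2 \<le> d r b"
  shows "c1 = c2"
proof (rule ccontr)
  assume "c1 \<noteq> c2"
  then have "far_interior_walk r [c1, b, c2]"
    using assms edge_sym edge_vertices edge_irrefl by (auto simp: far_interior_walk_def)
  then show False
    using far_interior_walk_has_cycle acyclic assms(1) by blast
qed

lemma gdist_edge_cases: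
  assumes "r \<in> V" "E x y"
  shows "d r y = d r x + 1 \<or> d r x = d r y + 1"
proof (rule ccontr)
  assume "\<not> ?thesis"
  then have same: "d r x = d r y"
    using gdist_le_neighbour[OF assms(2,1)] gdist_le_neighbour[OF edge_sym[OF assms(2)] assms(1)]
    by linarith
  have "x \<noteq> r"
    using same assms edge_vertices edge_irrefl gdist_eq_0_iff by force
  then obtain p where "E x p" "d r p + 1 = d r x"
    using closer_neighbour assms edge_vertices by metis
  then show False
    using lower_neighbour_unique[OF assms(1) \<open>E x p\<close> assms(2)] same by simp
qed

lemma card_closer_neighbours:
  assumes "r \<in> V" "a \<in> V"
  shows "card {w \<in> V. E a w \<and> d r w < d r a} = (if a = r then 0 else 1)"
proof (cases "a = r")
  case False
  then obtain p where p: "E a p" "d r p + 1 = d r a"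
    using closer_neighbour assms by metis
  have "w = p" if "E a w" "d r w < d r a" for w
    using lower_neighbour_unique[OF assms(1) that(1) p(1)] that(2) p(2) by simp
  moreover have "d r p < d r a"
    using p(2) by simp
  ultimately have "{w \<in> V. E a w \<and> d r w < d r a} = {p}"
    using p(1) edge_vertices(2)[OF p(1)] by blast
  then show ?thesis
    using False by simp
qed (use assms in simp)

lemma closer_to_adjacent_iff:
  assumes "E u v" "E c w" "d c u = d c v + 1" "(c, w) \<noteq> (v, u)"
  shows "d u w < d u c \<longleftrightarrow> d v w < d v c"
proof -
  have V: "u \<in> V" "v \<in> V" "c \<in> V" "w \<in> V"
    using assms(1,2) edge_vertices by auto
  have uc: "d u c = d v c + 1"
    using assms(3) gdist_commute V by simp
  have "d v w < d v c" if "d u w < d u c"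
  proof (rule ccontr)
    assume "\<not> d v w < d v c"
    then have vw: "d v w = d v c + 1" and uw: "d u w = d v c"
      using gdist_edge_cases[OF V(2) assms(2)] gdist_edge_cases[OF V(1) assms(2)] that uc
      by auto
    show False
    proof (cases "w = u")
      case True
      then have "c = v"
        using vw gdist_edge[OF edge_sym[OF assms(1)]] gdist_eq_0_iff V by simp
      then show False
        using assms(4) True by simp
    next
      case False
      then obtain x where x: "E w x" "d u x + 1 = d u w"
        using closer_neighbour V by metis
      have "d v x \<le> d u x + 1"
        using gdist_le_neighbour'[OF edge_sym[OF assms(1)]] x(1) edge_vertices by blast
      then have "x = c"
        using lower_neighbour_unique[OF V(2) x(1) edge_sym[OF assms(2)]] x(2) uw vw by simp
      then show False
        using x(2) uw uc by simp
    qed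
  qed
  moreover have "d u w < d u c" if "d v w < d v c"
    using gdist_le_neighbour'[OF assms(1) V(4)] that uc by simp
  ultimately show ?thesis
    by blast
qed

end

section \<open>The Vicsek tree\<close>

fun anchor :: "'a vvert \<Rightarrow> 'a" where
  "anchor (Orig a) = a"
| "anchor (Sub a w) = a"
| "anchor (Leaf a i) = a"

locale vicsek = tree +
  fixes s :: nat
  assumes degree_le: "\<forall>v\<in>V. degree V E v \<le> s"
begin

abbreviation Vs :: "'a vvert set" where
  "Vs \<equiv> vicsek_V s V E"

abbreviation Es :: "'a vvert \<Rightarrow> 'a vvert \<Rightarrow> bool" where
  "Es \<equiv> vicsek_E s V E"

lemma Vs_iff [simp]:
  "Orig a \<in> Vs \<longleftrightarrow> a \<in> V"
  "Sub u v \<in> Vs \<longleftrightarrow> E u v"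
  "Leaf a i \<in> Vs \<longleftrightarrow> a \<in> V \<and> i < s - degree V E a"
  by (auto simp: vicsek_V_def)

lemma Es_sym: "Es x y \<Longrightarrow> Es y x"
  by (cases x; cases y) (auto intro: edge_sym)

lemma Es_vertices: "Es x y \<Longrightarrow> x \<in> Vs"
  by (cases x; cases y) (auto dest: edge_vertices)

lemma anchor_in_V: "x \<in> Vs \<Longrightarrow> anchor x \<in> V"
  by (cases x) (auto dest: edge_vertices)

lemma Es_irrefl: "\<not> Es x x"
  by (cases x) (auto simp: edge_irrefl)

lemma Es_Leaf: "Es (Leaf a i) z \<Longrightarrow> z = Orig a"
  by (cases z) auto

lemma Es_Sub: "Es (Sub u v) z \<Longrightarrow> z = Orig u \<or> z = Sub v u"
  by (cases z) auto

lemma anchor_fiber: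
  assumes "a \<in> V"
  shows "{x \<in> Vs. anchor x = a}
    = insert (Orig a) (Sub a ` {w \<in> V. E a w} \<union> Leaf a ` {..<s - degree V E a})"
proof (rule set_eqI)
  fix x
  show "x \<in> {x \<in> Vs. anchor x = a} \<longleftrightarrow>
      x \<in> insert (Orig a) (Sub a ` {w \<in> V. E a w} \<union> Leaf a ` {..<s - degree V E a})"
    using assms by (cases x) (auto dest: edge_vertices)
qed

lemma finite_Vs: "finite Vs"
proof -
  have "Vs \<subseteq> (\<Union>a\<in>V. {x \<in> Vs. anchor x = a})"
    using anchor_in_V by blast
  then show ?thesis
    using finite_V anchor_fiber by (auto intro: finite_subset)
qed

lemma reachable_Vs:
  assumes "r \<in> V" "y \<in> Vs"
  shows "reachable Vs Es (Orig r) y"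
proof -
  have Orig: "reachable Vs Es (Orig r) (Orig a)" if "a \<in> V" for a
    using that
  proof (induction "d r a" arbitrary: a)
    case 0
    then show ?case
      using assms(1) gdist_eq_0_iff reachable_refl by (metis Vs_iff(1))
  next
    case (Suc n)
    then have "a \<noteq> r"
      using assms(1) by force
    then obtain p where "E a p" "d r p + 1 = d r a"
      using closer_neighbour assms(1) Suc.prems by metis
    moreover have "reachable Vs Es (Orig r) (Orig p)"
      using Suc calculation edge_vertices by force
    ultimately have "reachable Vs Es (Orig r) (Sub p a)"
      using edge_sym reachable_edge by fastforce
    then have "reachable Vs Es (Orig r) (Sub a p)"
      using \<open>E a p\<close> edge_sym reachable_edge by fastforce
    then show ?case
      using \<open>E a p\<close> Suc.prems reachable_edge by fastforce
  qed
  show ?thesis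
  proof (cases y)
    case (Sub a w)
    then show ?thesis
      using Orig[of a] assms(2) edge_vertices by (auto intro: reachable_edge)
  next
    case (Leaf a i)
    then show ?thesis
      using Orig[of a] assms(2) by (auto intro: reachable_edge)
  qed (use Orig assms in auto)
qed

sublocale vs: connected_simple_graph Vs Es
proof
  show "simple_graph Vs Es"
    unfolding simple_graph_def using finite_Vs Es_vertices Es_sym Es_irrefl by blast
  show "connected_graph Vs Es"
  proof (cases "V = {}")
    case True
    then have "Vs = {}"
      by (auto simp: vicsek_V_def dest: edge_vertices)
    then show ?thesis
      by (simp add: connected_graph_def)
  next
    case False
    then obtain r where "r \<in> V"
      by blast
    then show ?thesis
      using reachable_Vs Es_sym by (intro connected_graphI_root)
  qed
qed

fun offset :: "'a vvert \<Rightarrow> 'a \<Rightarrow> int" where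
  "offset (Orig a) b = 0"
| "offset (Leaf a i) b = 1"
| "offset (Sub a w) b = (if d b w < d b a then -1 else 1)"

lemma offset_bounds: "-1 \<le> offset x b" "offset x b \<le> 1"
  by (cases x; simp)+

lemma gdist_Orig:
  assumes "b \<in> V" "y \<in> Vs"
  shows "int (vs.d (Orig b) y) = 3 * int (d b (anchor y)) + offset y b"
proof -
  define g where "g y = 3 * int (d b (anchor y)) + offset y b" for y
  have "g z \<le> g y + 1" if "Es y z" for y z
  proof (cases y)
    case (Sub u v)
    with that have "E u v" "z = Orig u \<or> z = Sub v u"
      using Es_Sub Es_vertices by fastforce+
    then show ?thesis
      using gdist_edge_cases[OF assms(1), of u v] Sub by (auto simp: g_def)
  qed (use that in \<open>cases z; auto simp: g_def\<close>)+
  moreover have "\<exists>z. Es y z \<and> g z + 1 = g y" if "y \<in> Vs" "y \<noteq> Orig b" for y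
  proof (cases y)
    case (Orig a)
    with that obtain p where "E a p" "d b p + 1 = d b a"
      using closer_neighbour assms(1) by (metis Vs_iff(1))
    then show ?thesis
      using Orig by (intro exI[of _ "Sub a p"]) (auto simp: g_def)
  next
    case (Sub u v)
    with that have "E u v"
      by simp
    show ?thesis
    proof (cases "d b v < d b u")
      case True
      then show ?thesis
        using Sub \<open>E u v\<close> gdist_edge_cases[OF assms(1) \<open>E u v\<close>] edge_sym
        by (intro exI[of _ "Sub v u"]) (auto simp: g_def)
    qed (use Sub \<open>E u v\<close> in \<open>auto intro: exI[of _ "Orig u"] simp: g_def\<close>)
  qed (use that in \<open>auto intro: exI[of _ "Orig (anchor y)"] simp: g_def\<close>)
  moreover have "0 \<le> g y" for y
    by (cases y) (auto simp: g_def)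
  ultimately show ?thesis
    using vs.gdist_eqI[of "Orig b" g y] assms by (simp add: g_def)
qed

lemma gdist_Leaf:
  assumes "Leaf a i \<in> Vs" "y \<in> Vs" "y \<noteq> Leaf a i"
  shows "vs.d (Leaf a i) y = vs.d (Orig a) y + 1"
proof -
  obtain z where "Es (Leaf a i) z" "vs.d z y + 1 = vs.d (Leaf a i) y"
    using vs.closer_neighbour' assms by metis
  then show ?thesis
    using Es_Leaf by auto
qed

lemma gdist_Sub:
  assumes "Sub u v \<in> Vs" "y \<in> Vs" "y \<noteq> Sub u v" "y \<noteq> Sub v u"
  shows "vs.d (Sub u v) y = min (vs.d (Orig u) y + 1) (vs.d (Orig v) y + 2)"
proof -
  have step: "vs.d (Sub x x') y \<le> vs.d (Orig x) y + 1 \<and> vs.d (Sub x x') y \<le> vs.d (Sub x' x) y + 1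
      \<and> (vs.d (Sub x x') y = vs.d (Orig x) y + 1 \<or> vs.d (Sub x x') y = vs.d (Sub x' x) y + 1)"
    if edge: "E x x'" and ne: "y \<noteq> Sub x x'" for x x'
  proof -
    obtain z where z: "Es (Sub x x') z" "vs.d z y + 1 = vs.d (Sub x x') y"
      using vs.closer_neighbour' edge ne assms(2) by (metis Vs_iff(2))
    then have "z = Orig x \<or> z = Sub x' x"
      using Es_Sub by blast
    then have "vs.d (Sub x x') y = vs.d (Orig x) y + 1 \<or> vs.d (Sub x x') y = vs.d (Sub x' x) y + 1"
      using z(2) by auto
    moreover have "vs.d (Sub x x') y \<le> vs.d (Orig x) y + 1"
      by (rule vs.gdist_le_neighbour') (use edge assms(2) in simp_all)
    moreover have "vs.d (Sub x x') y \<le> vs.d (Sub x' x) y + 1"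
      by (rule vs.gdist_le_neighbour') (use edge assms(2) in simp_all)
    ultimately show ?thesis
      by blast
  qed
  have "E u v"
    using assms(1) by simp
  from step[OF this assms(3)] step[OF edge_sym[OF this] assms(4)] show ?thesis
    unfolding min_def by (split if_split, intro conjI impI; linarith)
qed

lemma offset_eq_if_between:
  assumes "E u v" "y \<in> Vs" "y \<noteq> Sub v u" "d (anchor y) u = d (anchor y) v + 1"
  shows "offset y u = offset y v"
proof (cases y)
  case (Sub c w)
  then show ?thesis
    using closer_to_adjacent_iff[OF assms(1), of c w] assms by auto
qed simp_all

lemma gdist_Vs:
  assumes "x \<in> Vs" "y \<in> Vs" "x \<noteq> y"
  shows "int (vs.d x y) = 3 * int (d (anchor x) (anchor y)) + offset x (anchor y) + offset y (anchor x)"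
proof (cases x)
  case (Orig a)
  then show ?thesis
    using gdist_Orig assms by simp
next
  case (Leaf a i)
  then show ?thesis
    using gdist_Leaf gdist_Orig assms gdist_commute anchor_in_V by simp
next
  case (Sub u v)
  define c where "c = anchor y"
  have "E u v" "u \<in> V" "v \<in> V" "c \<in> V"
    using assms Sub edge_vertices anchor_in_V by (auto simp: c_def)
  show ?thesis
  proof (cases "y = Sub v u")
    case True
    then show ?thesis
      using Sub vs.gdist_edge[of x y] \<open>E u v\<close> \<open>u \<in> V\<close> \<open>v \<in> V\<close> edge_sym gdist_edge
      by auto
  next
    case False
    have "int (vs.d x y) = min (int (vs.d (Orig u) y) + 1) (int (vs.d (Orig v) y) + 2)"
      using gdist_Sub[OF _ assms(2) _ False] assms Sub by (simp add: min_def)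
    also have "\<dots> = min (3 * int (d u c) + offset y u + 1) (3 * int (d v c) + offset y v + 2)"
      using gdist_Orig assms(2) \<open>u \<in> V\<close> \<open>v \<in> V\<close> by (simp add: c_def)
    finally have "int (vs.d x y) = \<dots>" .
    moreover have "d c v = d c u + 1 \<or> d c u = d c v + 1"
      using gdist_edge_cases[OF \<open>c \<in> V\<close> \<open>E u v\<close>] .
    moreover have "d c u = d c v + 1 \<Longrightarrow> offset y u = offset y v"
      using offset_eq_if_between[OF \<open>E u v\<close> assms(2) False] by (simp add: c_def)
    ultimately show ?thesis
      using offset_bounds[of y u] offset_bounds[of y v] Sub gdist_commute \<open>u \<in> V\<close> \<open>v \<in> V\<close> \<open>c \<in> V\<close>
      by (auto simp: c_def)
  qed
qed

lemma sum_Vs_by_anchor: "(\<Sum>x\<in>Vs. h x) = (\<Sum>a\<in>V. \<Sum>x | x \<in> Vs \<and> anchor x = a. h x)"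
  using sum.group[OF finite_Vs finite_V, of anchor h] anchor_in_V by (simp add: image_subsetI)

lemma sum_anchor_fiber:
  assumes "a \<in> V"
  shows "(\<Sum>x | x \<in> Vs \<and> anchor x = a. h x)
    = h (Orig a) + (\<Sum>w | w \<in> V \<and> E a w. h (Sub a w)) + (\<Sum>i<s - degree V E a. h (Leaf a i))"
proof -
  have "sum h (Sub a ` {w \<in> V. E a w} \<union> Leaf a ` {..<s - degree V E a})
      = sum h (Sub a ` {w \<in> V. E a w}) + sum h (Leaf a ` {..<s - degree V E a})"
    using finite_V by (intro sum.union_disjoint) auto
  moreover have "sum h (insert (Orig a) (Sub a ` {w \<in> V. E a w} \<union> Leaf a ` {..<s - degree V E a}))
      = h (Orig a) + sum h (Sub a ` {w \<in> V. E a w} \<union> Leaf a ` {..<s - degree V E a})"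
    using finite_V by (intro sum.insert) auto
  ultimately show ?thesis
    by (simp add: anchor_fiber[OF assms] sum.reindex inj_on_def add.assoc)
qed

lemma card_anchor_fiber:
  assumes "a \<in> V"
  shows "card {x \<in> Vs. anchor x = a} = s + 1"
  using sum_anchor_fiber[OF assms, of "\<lambda>_. 1 :: nat"] degree_le assms
  by (simp add: degree_def)

lemma sum_anchor:
  fixes f :: "'a \<Rightarrow> int"
  shows "(\<Sum>x\<in>Vs. f (anchor x)) = (int s + 1) * (\<Sum>a\<in>V. f a)"
proof -
  have "(\<Sum>x\<in>Vs. f (anchor x)) = (\<Sum>a\<in>V. \<Sum>x | x \<in> Vs \<and> anchor x = a. f a)"
    unfolding sum_Vs_by_anchor by (intro sum.cong) auto
  also have "\<dots> = (\<Sum>a\<in>V. (int s + 1) * f a)"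
    using card_anchor_fiber by (intro sum.cong) auto
  finally show ?thesis
    by (simp add: sum_distrib_left)
qed

lemma sum_offset_fiber:
  assumes "a \<in> V" "b \<in> V"
  shows "(\<Sum>x | x \<in> Vs \<and> anchor x = a. offset x b) = int s - 2 * of_bool (a \<noteq> b)"
proof -
  let ?N = "{w \<in> V. E a w}"
  have "(\<Sum>w\<in>?N. offset (Sub a w) b) = (\<Sum>w\<in>?N. 1 - 2 * of_bool (d b w < d b a))"
    by (intro sum.cong) auto
  also have "\<dots> = int (card ?N) - 2 * int (card {w \<in> V. E a w \<and> d b w < d b a})"
    using finite_V by (simp add: sum_subtractf sum_distrib_left[symmetric] Int_def conj_assoc)
  also have "\<dots> = int (card ?N) - 2 * of_bool (a \<noteq> b)"
    using card_closer_neighbours[OF assms(2,1)] by auto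
  finally have "(\<Sum>w\<in>?N. offset (Sub a w) b) = int (card ?N) - 2 * of_bool (a \<noteq> b)" .
  moreover have "card ?N \<le> s"
    using degree_le assms(1) by (simp add: degree_def)
  ultimately show ?thesis
    by (simp add: sum_anchor_fiber[OF assms(1)] degree_def of_nat_diff)
qed

lemma sum_offset:
  assumes "b \<in> V"
  shows "(\<Sum>x\<in>Vs. offset x b) = int s * int (card V) - 2 * (int (card V) - 1)"
proof -
  have "(\<Sum>x\<in>Vs. offset x b) = (\<Sum>a\<in>V. int s - 2 * of_bool (a \<noteq> b))"
    unfolding sum_Vs_by_anchor using sum_offset_fiber assms by (intro sum.cong) auto
  also have "\<dots> = int s * int (card V) - 2 * int (card (V - {b}))"
    using finite_V by (simp add: sum_subtractf sum_distrib_left[symmetric] Diff_eq Collect_neg_eq)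
  also have "int (card (V - {b})) = int (card V) - 1"
    using assms finite_V card_gt_0_iff[of V] by (auto simp: card_Diff_singleton of_nat_diff)
  finally show ?thesis .
qed

lemma sum_offset_anchor: "(\<Sum>x\<in>Vs. offset x (anchor x)) = int s * int (card V)"
proof -
  have "(\<Sum>x\<in>Vs. offset x (anchor x)) = (\<Sum>a\<in>V. \<Sum>x | x \<in> Vs \<and> anchor x = a. offset x a)"
    unfolding sum_Vs_by_anchor by (intro sum.cong) auto
  also have "\<dots> = (\<Sum>a\<in>V. int s)"
    using sum_offset_fiber by (intro sum.cong) auto
  finally show ?thesis
    by simp
qed

lemma sum_gdist_Vs:
  defines "n \<equiv> int (card V)"
  shows "(\<Sum>x\<in>Vs. \<Sum>y\<in>Vs. int (vs.d x y))
    = 3 * (int s + 1)^2 * (\<Sum>a\<in>V. \<Sum>b\<in>V. int (d a b))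
      + 2 * (int s + 1) * n * (int s * n - 2 * (n - 1)) - 2 * int s * n"
proof -
  define F where
    "F x y = 3 * int (d (anchor x) (anchor y)) + offset x (anchor y) + offset y (anchor x)" for x y
  have "int (vs.d x y) = F x y - (if x = y then 2 * offset x (anchor x) else 0)"
    if "x \<in> Vs" "y \<in> Vs" for x y
    using gdist_Vs[OF that] that anchor_in_V by (auto simp: F_def)
  then have "(\<Sum>x\<in>Vs. \<Sum>y\<in>Vs. int (vs.d x y))
      = (\<Sum>x\<in>Vs. (\<Sum>y\<in>Vs. F x y) - 2 * offset x (anchor x))"
    using finite_Vs by (intro sum.cong) (simp_all add: sum_subtractf sum.delta)
  also have "\<dots> = (\<Sum>x\<in>Vs. \<Sum>y\<in>Vs. F x y) - 2 * int s * n"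
    by (simp add: sum_subtractf sum_distrib_left[symmetric] sum_offset_anchor n_def)
  also have "(\<Sum>x\<in>Vs. \<Sum>y\<in>Vs. F x y) = 3 * (\<Sum>x\<in>Vs. \<Sum>y\<in>Vs. int (d (anchor x) (anchor y)))
      + 2 * (\<Sum>x\<in>Vs. \<Sum>y\<in>Vs. offset x (anchor y))"
    unfolding F_def by (simp add: sum.distrib sum_distrib_left sum.swap[of "\<lambda>x y. offset y (anchor x)"])
  also have "(\<Sum>x\<in>Vs. \<Sum>y\<in>Vs. int (d (anchor x) (anchor y)))
      = (int s + 1)^2 * (\<Sum>a\<in>V. \<Sum>b\<in>V. int (d a b))"
    using sum_anchor[of "\<lambda>a. int (d (anchor _) a)"] sum_anchor[of "\<lambda>a. \<Sum>b\<in>V. int (d a b)"]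
    by (simp add: sum_distrib_left[symmetric] power2_eq_square)
  also have "(\<Sum>x\<in>Vs. \<Sum>y\<in>Vs. offset x (anchor y)) = (int s + 1) * n * (int s * n - 2 * (n - 1))"
  proof -
    have "(\<Sum>x\<in>Vs. \<Sum>y\<in>Vs. offset x (anchor y)) = (int s + 1) * (\<Sum>b\<in>V. \<Sum>x\<in>Vs. offset x b)"
      by (simp add: sum_anchor sum_distrib_left[symmetric] sum.swap[of _ V])
    also have "\<dots> = (int s + 1) * (\<Sum>b\<in>V. int s * n - 2 * (n - 1))"
      using sum_offset by (simp add: n_def)
    finally show ?thesis
      by (simp add: n_def)
  qed
  finally show ?thesis
    by (simp add: algebra_simps)
qed

end

theorem theorem2:
  fixes s :: nat and V :: "'a set" and E :: "'a \<Rightarrow> 'a \<Rightarrow> bool"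
  assumes "s \<ge> 2"
    and "is_tree V E"
    and "\<forall>v\<in>V. degree V E v \<le> s"
  shows "int (wiener (vicsek_V s V E) (vicsek_E s V E))
         = 3 * (int s + 1)^2 * int (wiener V E)
           + (int s ^ 2 - int s - 2) * (int (card V))^2 + (int s + 2) * int (card V)"
proof -
  interpret vicsek V E s
    using assms(2,3) by unfold_locales (auto simp: is_tree_def)
  have "2 * int (wiener Vs Es) = 3 * (int s + 1)^2 * (2 * int (wiener V E))
      + 2 * (int s + 1) * int (card V) * (int s * int (card V) - 2 * (int (card V) - 1))
      - 2 * int s * int (card V)"
    using vs.double_wiener sum_gdist_Vs double_wiener by simp
  then show ?thesis
    by (simp add: algebra_simps power2_eq_square)
qed

end
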